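(* Let $\mathbf L=(L,\vee,\wedge)$ be a partial lattice and $E\in\operatorname{Con}\mathbf L$. Then $\mathbf L/E:=(L/E,\vee,\wedge)$ is a partial lattice.
   Context: A partial lattice is a set $L$ with two partial binary operations $\vee,\wedge$ satisfying the strong identities $x\vee x\stackrel{s}{\approx}x$, $x\wedge x\stackrel{s}{\approx}x$, $x\vee y\stackrel{s}{\approx}y\vee x$, $x\wedge y\stackrel{s}{\approx}y\wedge x$, $(x\vee y)\vee z\stackrel{s}{\approx}x\vee(y\vee z)$, $(x\wedge y)\wedge z\stackrel{s}{\approx}x\wedge(y\wedge z)$ (for every assignment, one side is defined iff the other is, and then they are equal) and the duality conditions: if $a\vee b$ is defined and equals $a$ then $a\wedge b$ is defined and equals $b$; if $a\wedge b$ is defined and equals $a$ then $a\vee b$ is defined and equals $b$. Its induced order is $x\leq y$ iff $x\vee y$ is defined and equals $y$. The two-point extension $\mathbf L^*=(L^*,\leq^* )$, with new elements $0,1\notin L$: $L^*$ is $L$ together with a new top element $1$ if $\vee$ is not everywhere defined and a new bottom element $0$ if $\wedge$ is not everywhere defined; $\leq^*$ extends $\leq$ by putting $0$ below and $1$ above all elements; it is a lattice with operations $\vee^*=\sup_{\leq^*}$, $\wedge^*=\inf_{\leq^*}$. A congruence on $\mathbf L$ is an equivalence relation $E$ on $L$ with $\Theta(E)\cap L^2=E$, where $\Theta(E)$ is the lattice congruence on $\mathbf L^*$ generated by $E$; $\operatorname{Con}\mathbf L$ is the set of these. For $E\in\operatorname{Con}\mathbf L$ the partial operations on $L/E$ are: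 $[x]E\vee[y]E:=[x\vee^*y]\Theta(E)\cap L$ if this set is non-empty, undefined otherwise; $[x]E\wedge[y]E:=[x\wedge^*y]\Theta(E)\cap L$ if this set is non-empty, undefined otherwise (these are well defined). *)

theory Defs
  imports Main
begin

text \<open>A partial binary operation on a carrier set L is modelled as a function
  into option; None means "undefined". Only arguments from L matter.\<close>

definition partial_lattice ::
  "'a set \<Rightarrow> ('a \<Rightarrow> 'a \<Rightarrow> 'a option) \<Rightarrow> ('a \<Rightarrow> 'a \<Rightarrow> 'a option) \<Rightarrow> bool" where
  "partial_lattice L J M \<longleftrightarrow>
     (\<forall>x\<in>L. \<forall>y\<in>L. \<forall>z. J x y = Some z \<longrightarrow> z \<in> L) \<and>
     (\<forall>x\<in>L. \<forall>y\<in>L. \<forall>z. M x y = Some z \<longrightarrow> z \<in> L) \<and>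
     (\<forall>x\<in>L. J x x = Some x) \<and>
     (\<forall>x\<in>L. M x x = Some x) \<and>
     (\<forall>x\<in>L. \<forall>y\<in>L. J x y = J y x) \<and>
     (\<forall>x\<in>L. \<forall>y\<in>L. M x y = M y x) \<and>
     (\<forall>x\<in>L. \<forall>y\<in>L. \<forall>z\<in>L.
        Option.bind (J x y) (\<lambda>u. J u z) = Option.bind (J y z) (\<lambda>v. J x v)) \<and>
     (\<forall>x\<in>L. \<forall>y\<in>L. \<forall>z\<in>L.
        Option.bind (M x y) (\<lambda>u. M u z) = Option.bind (M y z) (\<lambda>v. M x v)) \<and>
     (\<forall>a\<in>L. \<forall>b\<in>L. J a b = Some a \<longrightarrow> M a b = Some b) \<and>
     (\<forall>a\<in>L. \<forall>b\<in>L. M a b = Some a \<longrightarrow> J a b = Some b)"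

datatype 'a ext = Bot | Elt 'a | Top

definition total_op :: "'a set \<Rightarrow> ('a \<Rightarrow> 'a \<Rightarrow> 'a option) \<Rightarrow> bool" where
  "total_op L F \<longleftrightarrow> (\<forall>x\<in>L. \<forall>y\<in>L. F x y \<noteq> None)"

definition ext_carrier ::
  "'a set \<Rightarrow> ('a \<Rightarrow> 'a \<Rightarrow> 'a option) \<Rightarrow> ('a \<Rightarrow> 'a \<Rightarrow> 'a option) \<Rightarrow> 'a ext set" where
  "ext_carrier L J M = Elt ` L \<union> (if total_op L J then {} else {Top})
                              \<union> (if total_op L M then {} else {Bot})"

fun ext_le :: "('a \<Rightarrow> 'a \<Rightarrow> 'a option) \<Rightarrow> 'a ext \<Rightarrow> 'a ext \<Rightarrow> bool" where
  "ext_le J Bot _ = True"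
| "ext_le J _ Top = True"
| "ext_le J (Elt x) (Elt y) = (J x y = Some y)"
| "ext_le J _ _ = False"

definition ext_sup ::
  "'a set \<Rightarrow> ('a \<Rightarrow> 'a \<Rightarrow> 'a option) \<Rightarrow> ('a \<Rightarrow> 'a \<Rightarrow> 'a option) \<Rightarrow> 'a ext \<Rightarrow> 'a ext \<Rightarrow> 'a ext" where
  "ext_sup L J M a b = (THE c. c \<in> ext_carrier L J M \<and> ext_le J a c \<and> ext_le J b c \<and>
      (\<forall>d\<in>ext_carrier L J M. ext_le J a d \<and> ext_le J b d \<longrightarrow> ext_le J c d))"

definition ext_inf ::
  "'a set \<Rightarrow> ('a \<Rightarrow> 'a \<Rightarrow> 'a option) \<Rightarrow> ('a \<Rightarrow> 'a \<Rightarrow> 'a option) \<Rightarrow> 'a ext \<Rightarrow> 'a ext \<Rightarrow> 'a ext" where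
  "ext_inf L J M a b = (THE c. c \<in> ext_carrier L J M \<and> ext_le J c a \<and> ext_le J c b \<and>
      (\<forall>d\<in>ext_carrier L J M. ext_le J d a \<and> ext_le J d b \<longrightarrow> ext_le J d c))"

definition ext_lattice_cong ::
  "'a set \<Rightarrow> ('a \<Rightarrow> 'a \<Rightarrow> 'a option) \<Rightarrow> ('a \<Rightarrow> 'a \<Rightarrow> 'a option) \<Rightarrow> ('a ext \<times> 'a ext) set \<Rightarrow> bool" where
  "ext_lattice_cong L J M T \<longleftrightarrow> equiv (ext_carrier L J M) T \<and>
     (\<forall>a a' b b'. (a, a') \<in> T \<and> (b, b') \<in> T \<longrightarrow>
        (ext_sup L J M a b, ext_sup L J M a' b') \<in> T \<and>
        (ext_inf L J M a b, ext_inf L J M a' b') \<in> T)"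

definition Theta ::
  "'a set \<Rightarrow> ('a \<Rightarrow> 'a \<Rightarrow> 'a option) \<Rightarrow> ('a \<Rightarrow> 'a \<Rightarrow> 'a option) \<Rightarrow> ('a \<times> 'a) set
     \<Rightarrow> ('a ext \<times> 'a ext) set" where
  "Theta L J M E = \<Inter> {T. ext_lattice_cong L J M T \<and> (\<lambda>(x, y). (Elt x, Elt y)) ` E \<subseteq> T}"

definition Con ::
  "'a set \<Rightarrow> ('a \<Rightarrow> 'a \<Rightarrow> 'a option) \<Rightarrow> ('a \<Rightarrow> 'a \<Rightarrow> 'a option) \<Rightarrow> ('a \<times> 'a) set set" where
  "Con L J M = {E. equiv L E \<and> {(x, y). (Elt x, Elt y) \<in> Theta L J M E} = E}"

text \<open>Operations of L/E on classes: [x]E \<or> [y]E := [x \<or>* y]\<Theta>(E) \<inter> L if nonempty.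
  Representatives are chosen by SOME (the paper asserts well-definedness).\<close>
definition quot_join ::
  "'a set \<Rightarrow> ('a \<Rightarrow> 'a \<Rightarrow> 'a option) \<Rightarrow> ('a \<Rightarrow> 'a \<Rightarrow> 'a option) \<Rightarrow> ('a \<times> 'a) set
     \<Rightarrow> 'a set \<Rightarrow> 'a set \<Rightarrow> 'a set option" where
  "quot_join L J M E A B =
     (if A \<in> L // E \<and> B \<in> L // E then
        (let x = (SOME x. x \<in> A); y = (SOME y. y \<in> B);
             C = {z \<in> L. (ext_sup L J M (Elt x) (Elt y), Elt z) \<in> Theta L J M E}
         in if C = {} then None else Some C)
      else None)"

definition quot_meet ::
  "'a set \<Rightarrow> ('a \<Rightarrow> 'a \<Rightarrow> 'a option) \<Rightarrow> ('a \<Rightarrow> 'a \<Rightarrow> 'a option) \<Rightarrow> ('a \<times> 'a) set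
     \<Rightarrow> 'a set \<Rightarrow> 'a set \<Rightarrow> 'a set option" where
  "quot_meet L J M E A B =
     (if A \<in> L // E \<and> B \<in> L // E then
        (let x = (SOME x. x \<in> A); y = (SOME y. y \<in> B);
             C = {z \<in> L. (ext_inf L J M (Elt x) (Elt y), Elt z) \<in> Theta L J M E}
         in if C = {} then None else Some C)
      else None)"

end

theory Submission
  imports Defs "HOL-Algebra.Complete_Lattice"
begin

text \<open>\<open>L*\<close> is a lattice and \<open>\<Theta>(E)\<close> is a lattice congruence of it whose trace on \<open>L\<close> is \<open>E\<close>,
  so the class of \<open>x\<close> in \<open>L/E\<close> is \<open>[x]\<Theta>(E) \<inter> L\<close>. The join (meet) of two classes is the trace
  of the join (meet) of representatives in \<open>L*\<close>; it is undefined exactly when that join is the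
  adjoined \<open>1\<close> (that meet the adjoined \<open>0\<close>), which absorbs all further joins (meets).
  Compatibility of \<open>\<Theta>(E)\<close> then transports idempotency, commutativity and associativity of
  \<open>\<or>*\<close> and \<open>\<and>*\<close> to \<open>L/E\<close>, and the absorption laws of \<open>L*\<close> give the duality conditions.\<close>

section \<open>Partial lattices\<close>

locale partial_lattice_on =
  fixes L :: "'a set" and J M :: "'a \<Rightarrow> 'a \<Rightarrow> 'a option"
  assumes partial_lattice: "partial_lattice L J M"
begin

lemma join_closed: "x \<in> L \<Longrightarrow> y \<in> L \<Longrightarrow> J x y = Some z \<Longrightarrow> z \<in> L"
  using partial_lattice unfolding partial_lattice_def by (metis (no_types, lifting))

lemma meet_closed: "x \<in> L \<Longrightarrow> y \<in> L \<Longrightarrow> M x y = Some z \<Longrightarrow> z \<in> L"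
  using partial_lattice unfolding partial_lattice_def by (metis (no_types, lifting))

lemma join_idem: "x \<in> L \<Longrightarrow> J x x = Some x"
  using partial_lattice unfolding partial_lattice_def by (metis (no_types, lifting))

lemma meet_idem: "x \<in> L \<Longrightarrow> M x x = Some x"
  using partial_lattice unfolding partial_lattice_def by (metis (no_types, lifting))

lemma join_commute: "x \<in> L \<Longrightarrow> y \<in> L \<Longrightarrow> J x y = J y x"
  using partial_lattice unfolding partial_lattice_def by (metis (no_types, lifting))

lemma meet_commute: "x \<in> L \<Longrightarrow> y \<in> L \<Longrightarrow> M x y = M y x"
  using partial_lattice unfolding partial_lattice_def by (metis (no_types, lifting))

lemma join_assoc: "x \<in> L \<Longrightarrow> y \<in> L \<Longrightarrow> z \<in> L \<Longrightarrow>
     Option.bind (J x y) (\<lambda>u. J u z) = Option.bind (J y z) (J x)"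
  using partial_lattice unfolding partial_lattice_def by (metis (no_types, lifting))

lemma meet_assoc: "x \<in> L \<Longrightarrow> y \<in> L \<Longrightarrow> z \<in> L \<Longrightarrow>
     Option.bind (M x y) (\<lambda>u. M u z) = Option.bind (M y z) (M x)"
  using partial_lattice unfolding partial_lattice_def by (metis (no_types, lifting))

lemma join_eq_left_imp_meet: "x \<in> L \<Longrightarrow> y \<in> L \<Longrightarrow> J x y = Some x \<Longrightarrow> M x y = Some y"
  using partial_lattice unfolding partial_lattice_def by (metis (no_types, lifting))

lemma meet_eq_left_imp_join: "x \<in> L \<Longrightarrow> y \<in> L \<Longrightarrow> M x y = Some x \<Longrightarrow> J x y = Some y"
  using partial_lattice unfolding partial_lattice_def by (metis (no_types, lifting))

lemma join_eq_iff_meet_eq: "x \<in> L \<Longrightarrow> y \<in> L \<Longrightarrow> J x y = Some y \<longleftrightarrow> M x y = Some x"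
  using join_eq_left_imp_meet[of y x] meet_eq_left_imp_join[of x y] join_commute[of x y]
    meet_commute[of x y]
  by auto

lemma join_trans:
  assumes "x \<in> L" "y \<in> L" "z \<in> L" "J x y = Some y" "J y z = Some z"
  shows "J x z = Some z"
  using join_assoc[of x y z] assms by simp

(* Associativity at x, y, d: since x \<or> (y \<or> d) = x \<or> d = d, the join x \<or> y exists
   and lies below d. *)
lemma join_below_upper_bound:
  assumes "x \<in> L" "y \<in> L" "d \<in> L" "J x d = Some d" "J y d = Some d"
  shows "\<exists>z. J x y = Some z \<and> J z d = Some d"
  using join_assoc[of x y d] assms by (cases "J x y") auto

lemma join_upper:
  assumes "x \<in> L" "y \<in> L" "J x y = Some z"
  shows "J x z = Some z" "J y z = Some z"
proof -
  show "J x z = Some z" using join_assoc[of x x y] join_idem[of x] assms by simp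
  have "z \<in> L" using join_closed assms by blast
  then show "J y z = Some z"
    using join_assoc[of x y y] join_idem[of y] join_commute[of y z] assms by simp
qed

lemma meet_above_lower_bound:
  assumes "x \<in> L" "y \<in> L" "d \<in> L" "M d x = Some d" "M d y = Some d"
  shows "\<exists>z. M x y = Some z \<and> M d z = Some d"
  using meet_assoc[of d x y] assms by (cases "M x y") auto

lemma meet_lower:
  assumes "x \<in> L" "y \<in> L" "M x y = Some z"
  shows "M z x = Some z" "M z y = Some z"
proof -
  show "M z y = Some z" using meet_assoc[of x y y] meet_idem[of y] assms by simp
  have "M y x = Some z" using meet_commute[of x y] assms by simp
  then show "M z x = Some z" using meet_assoc[of y x x] meet_idem[of x] assms by simp
qed

end

section \<open>The two-point extension as a lattice\<close>

lemma Elt_in_ext_carrier [simp]: "Elt x \<in> ext_carrier L J M \<longleftrightarrow> x \<in> L"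
  by (auto simp: ext_carrier_def)

lemma Top_in_ext_carrier: "Top \<in> ext_carrier L J M \<longleftrightarrow> (\<exists>x\<in>L. \<exists>y\<in>L. J x y = None)"
  by (simp add: ext_carrier_def total_op_def image_iff)

lemma Bot_in_ext_carrier: "Bot \<in> ext_carrier L J M \<longleftrightarrow> (\<exists>x\<in>L. \<exists>y\<in>L. M x y = None)"
  by (simp add: ext_carrier_def total_op_def image_iff)

lemma ext_carrier_cases [consumes 1, case_names Bot Elt Top]:
  assumes "a \<in> ext_carrier L J M"
  obtains "a = Bot" | x where "a = Elt x" "x \<in> L" | "a = Top"
  using assms by (cases a) auto

lemma ext_le_Top [simp]: "ext_le J a Top"
  by (cases a) auto

lemma ext_Top_le_iff [simp]: "ext_le J Top a \<longleftrightarrow> a = Top"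
  by (cases a) auto

lemma ext_le_Bot_iff [simp]: "ext_le J a Bot \<longleftrightarrow> a = Bot"
  by (cases a) auto

definition ext_order :: "'a set \<Rightarrow> ('a \<Rightarrow> 'a \<Rightarrow> 'a option) \<Rightarrow> ('a \<Rightarrow> 'a \<Rightarrow> 'a option)
    \<Rightarrow> 'a ext gorder" where
  "ext_order L J M = \<lparr>carrier = ext_carrier L J M, eq = (=), le = ext_le J\<rparr>"

lemma carrier_ext_order [simp]: "carrier (ext_order L J M) = ext_carrier L J M"
  by (simp add: ext_order_def)

lemma least_Upper_ext_order_iff:
  assumes "a \<in> ext_carrier L J M" "b \<in> ext_carrier L J M"
  shows "least (ext_order L J M) c (Upper (ext_order L J M) {a, b}) \<longleftrightarrow>
    c \<in> ext_carrier L J M \<and> ext_le J a c \<and> ext_le J b c \<and>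
    (\<forall>d\<in>ext_carrier L J M. ext_le J a d \<and> ext_le J b d \<longrightarrow> ext_le J c d)"
  using assms by (auto simp: least_def Upper_def ext_order_def)

lemma greatest_Lower_ext_order_iff:
  assumes "a \<in> ext_carrier L J M" "b \<in> ext_carrier L J M"
  shows "greatest (ext_order L J M) c (Lower (ext_order L J M) {a, b}) \<longleftrightarrow>
    c \<in> ext_carrier L J M \<and> ext_le J c a \<and> ext_le J c b \<and>
    (\<forall>d\<in>ext_carrier L J M. ext_le J d a \<and> ext_le J d b \<longrightarrow> ext_le J d c)"
  using assms by (auto simp: greatest_def Lower_def ext_order_def)

context partial_lattice_on
begin

lemma ext_le_refl: "a \<in> ext_carrier L J M \<Longrightarrow> ext_le J a a"
  by (cases a) (auto simp: join_idem)

lemma partial_order_ext_order: "partial_order (ext_order L J M)"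
proof
  fix a b c
  assume "a \<in> carrier (ext_order L J M)" "b \<in> carrier (ext_order L J M)"
    "c \<in> carrier (ext_order L J M)"
  then have a: "a \<in> ext_carrier L J M" and b: "b \<in> ext_carrier L J M"
    and c: "c \<in> ext_carrier L J M"
    by simp_all
  show "a \<sqsubseteq>\<^bsub>ext_order L J M\<^esub> a"
    using ext_le_refl[OF a] by (simp add: ext_order_def)
  show "a \<sqsubseteq>\<^bsub>ext_order L J M\<^esub> b \<Longrightarrow> b \<sqsubseteq>\<^bsub>ext_order L J M\<^esub> a \<Longrightarrow> a .=\<^bsub>ext_order L J M\<^esub> b"
    using a b by (cases a; cases b) (auto simp: ext_order_def join_commute)
  show "a \<sqsubseteq>\<^bsub>ext_order L J M\<^esub> b \<Longrightarrow> b \<sqsubseteq>\<^bsub>ext_order L J M\<^esub> c \<Longrightarrow> a \<sqsubseteq>\<^bsub>ext_order L J M\<^esub> c"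
    using a b c by (cases a; cases b; cases c) (auto simp: ext_order_def intro: join_trans)
qed (auto simp: ext_order_def)

lemma ext_lub_Elt:
  assumes x: "x \<in> L" and y: "y \<in> L"
  shows "\<exists>c. c \<in> ext_carrier L J M \<and> ext_le J (Elt x) c \<and> ext_le J (Elt y) c \<and>
    (\<forall>d\<in>ext_carrier L J M. ext_le J (Elt x) d \<and> ext_le J (Elt y) d \<longrightarrow> ext_le J c d)"
proof (cases "J x y")
  case None
  have "d = Top" if d: "d \<in> ext_carrier L J M" "ext_le J (Elt x) d" "ext_le J (Elt y) d" for d
    using d(1)
  proof (cases rule: ext_carrier_cases)
    case (Elt w)
    then show ?thesis using d x y None join_below_upper_bound[of x y w] by simp
  qed (use d in simp_all)
  moreover have "Top \<in> ext_carrier L J M" using x y None by (auto simp: Top_in_ext_carrier)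
  ultimately show ?thesis by (intro exI[of _ Top]) simp
next
  case (Some z)
  have "ext_le J (Elt z) d" if d: "d \<in> ext_carrier L J M" "ext_le J (Elt x) d" "ext_le J (Elt y) d"
    for d
    using d(1)
  proof (cases rule: ext_carrier_cases)
    case (Elt w)
    then show ?thesis using d x y Some join_below_upper_bound[of x y w] by auto
  qed (use d in simp_all)
  moreover have "z \<in> L" using x y Some join_closed by blast
  ultimately show ?thesis using join_upper[OF x y Some] by (intro exI[of _ "Elt z"]) simp
qed

lemma ext_glb_Elt:
  assumes x: "x \<in> L" and y: "y \<in> L"
  shows "\<exists>c. c \<in> ext_carrier L J M \<and> ext_le J c (Elt x) \<and> ext_le J c (Elt y) \<and>
    (\<forall>d\<in>ext_carrier L J M. ext_le J d (Elt x) \<and> ext_le J d (Elt y) \<longrightarrow> ext_le J d c)"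
proof (cases "M x y")
  case None
  have "d = Bot" if d: "d \<in> ext_carrier L J M" "ext_le J d (Elt x)" "ext_le J d (Elt y)" for d
    using d(1)
  proof (cases rule: ext_carrier_cases)
    case (Elt w)
    then have "M w x = Some w" "M w y = Some w"
      using d x y join_eq_iff_meet_eq[of w] by simp_all
    then show ?thesis using Elt x y None meet_above_lower_bound[of x y w] by simp
  qed (use d in simp_all)
  moreover have "Bot \<in> ext_carrier L J M" using x y None by (auto simp: Bot_in_ext_carrier)
  ultimately show ?thesis by (intro exI[of _ Bot]) simp
next
  case (Some z)
  have z: "z \<in> L" using x y Some meet_closed by blast
  have "ext_le J d (Elt z)" if d: "d \<in> ext_carrier L J M" "ext_le J d (Elt x)" "ext_le J d (Elt y)"
    for d
    using d(1)
  proof (cases rule: ext_carrier_cases)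
    case (Elt w)
    then have "M w x = Some w" "M w y = Some w"
      using d x y join_eq_iff_meet_eq[of w] by simp_all
    then have "M w z = Some w" using Elt x y Some meet_above_lower_bound[of x y w] by auto
    then show ?thesis using Elt z join_eq_iff_meet_eq[of w z] by simp
  qed (use d in simp_all)
  moreover have "ext_le J (Elt z) (Elt x)" "ext_le J (Elt z) (Elt y)"
    using meet_lower[OF x y Some] join_eq_iff_meet_eq[of z] x y z by simp_all
  ultimately show ?thesis using z by (intro exI[of _ "Elt z"]) simp
qed

lemma ext_carrier_pair_cases:
  assumes "a \<in> ext_carrier L J M" "b \<in> ext_carrier L J M"
  obtains "ext_le J a b" | "ext_le J b a" | x y where "a = Elt x" "b = Elt y" "x \<in> L" "y \<in> L"
  using assms by (cases a; cases b) auto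

lemma ext_lub_exists:
  assumes a: "a \<in> ext_carrier L J M" and b: "b \<in> ext_carrier L J M"
  shows "\<exists>c. c \<in> ext_carrier L J M \<and> ext_le J a c \<and> ext_le J b c \<and>
    (\<forall>d\<in>ext_carrier L J M. ext_le J a d \<and> ext_le J b d \<longrightarrow> ext_le J c d)"
  using a b
proof (cases rule: ext_carrier_pair_cases)
  case 1 then show ?thesis using b ext_le_refl[OF b] by (intro exI[of _ b]) simp
next
  case 2 then show ?thesis using a ext_le_refl[OF a] by (intro exI[of _ a]) simp
next
  case (3 x y) then show ?thesis using ext_lub_Elt by simp
qed

lemma ext_glb_exists:
  assumes a: "a \<in> ext_carrier L J M" and b: "b \<in> ext_carrier L J M"
  shows "\<exists>c. c \<in> ext_carrier L J M \<and> ext_le J c a \<and> ext_le J c b \<and>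
    (\<forall>d\<in>ext_carrier L J M. ext_le J d a \<and> ext_le J d b \<longrightarrow> ext_le J d c)"
  using a b
proof (cases rule: ext_carrier_pair_cases)
  case 1 then show ?thesis using a ext_le_refl[OF a] by (intro exI[of _ a]) simp
next
  case 2 then show ?thesis using b ext_le_refl[OF b] by (intro exI[of _ b]) simp
next
  case (3 x y) then show ?thesis using ext_glb_Elt by simp
qed

lemma lattice_ext_order: "lattice (ext_order L J M)"
proof -
  interpret partial_order "ext_order L J M" by (rule partial_order_ext_order)
  show ?thesis
  proof
    fix a b assume "a \<in> carrier (ext_order L J M)" "b \<in> carrier (ext_order L J M)"
    then have a: "a \<in> ext_carrier L J M" and b: "b \<in> ext_carrier L J M"
      by simp_all
    show "\<exists>c. least (ext_order L J M) c (Upper (ext_order L J M) {a, b})"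
      using ext_lub_exists[OF a b] by (simp only: least_Upper_ext_order_iff[OF a b])
    show "\<exists>c. greatest (ext_order L J M) c (Lower (ext_order L J M) {a, b})"
      using ext_glb_exists[OF a b] by (simp only: greatest_Lower_ext_order_iff[OF a b])
  qed
qed

sublocale ext: lattice "ext_order L J M"
  by (rule lattice_ext_order)

lemma ext_sup_eq_join:
  assumes a: "a \<in> ext_carrier L J M" and b: "b \<in> ext_carrier L J M"
  shows "ext_sup L J M a b = a \<squnion>\<^bsub>ext_order L J M\<^esub> b"
proof -
  have "least (ext_order L J M) (a \<squnion>\<^bsub>ext_order L J M\<^esub> b) (Upper (ext_order L J M) {a, b})"
    unfolding join_def using ext.sup_of_two_least a b by simp
  then show ?thesis
    unfolding ext_sup_def least_Upper_ext_order_iff[OF a b, symmetric]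
    by (blast intro: the_equality ext.least_unique)
qed

lemma ext_inf_eq_meet:
  assumes a: "a \<in> ext_carrier L J M" and b: "b \<in> ext_carrier L J M"
  shows "ext_inf L J M a b = a \<sqinter>\<^bsub>ext_order L J M\<^esub> b"
proof -
  have "greatest (ext_order L J M) (a \<sqinter>\<^bsub>ext_order L J M\<^esub> b) (Lower (ext_order L J M) {a, b})"
    unfolding meet_def using ext.inf_of_two_greatest a b by simp
  then show ?thesis
    unfolding ext_inf_def greatest_Lower_ext_order_iff[OF a b, symmetric]
    by (blast intro: the_equality ext.greatest_unique)
qed

lemma ext_sup_closed:
  "a \<in> ext_carrier L J M \<Longrightarrow> b \<in> ext_carrier L J M \<Longrightarrow> ext_sup L J M a b \<in> ext_carrier L J M"
  using ext.join_closed by (simp add: ext_sup_eq_join)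

lemma ext_inf_closed:
  "a \<in> ext_carrier L J M \<Longrightarrow> b \<in> ext_carrier L J M \<Longrightarrow> ext_inf L J M a b \<in> ext_carrier L J M"
  using ext.meet_closed by (simp add: ext_inf_eq_meet)

lemma ext_sup_commute:
  "a \<in> ext_carrier L J M \<Longrightarrow> b \<in> ext_carrier L J M \<Longrightarrow> ext_sup L J M a b = ext_sup L J M b a"
  by (simp add: ext_sup_eq_join join_comm)

lemma ext_inf_commute:
  "a \<in> ext_carrier L J M \<Longrightarrow> b \<in> ext_carrier L J M \<Longrightarrow> ext_inf L J M a b = ext_inf L J M b a"
  by (simp add: ext_inf_eq_meet meet_comm)

lemma ext_sup_assoc:
  "a \<in> ext_carrier L J M \<Longrightarrow> b \<in> ext_carrier L J M \<Longrightarrow> c \<in> ext_carrier L J M \<Longrightarrow>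
    ext_sup L J M (ext_sup L J M a b) c = ext_sup L J M a (ext_sup L J M b c)"
  by (simp add: ext_sup_eq_join ext.join_assoc ext.join_closed[simplified])

lemma ext_inf_assoc:
  "a \<in> ext_carrier L J M \<Longrightarrow> b \<in> ext_carrier L J M \<Longrightarrow> c \<in> ext_carrier L J M \<Longrightarrow>
    ext_inf L J M (ext_inf L J M a b) c = ext_inf L J M a (ext_inf L J M b c)"
  by (simp add: ext_inf_eq_meet ext.meet_assoc ext.meet_closed[simplified])

lemma ext_sup_idem: "a \<in> ext_carrier L J M \<Longrightarrow> ext_sup L J M a a = a"
  by (simp add: ext_sup_eq_join join_def)

lemma ext_inf_idem: "a \<in> ext_carrier L J M \<Longrightarrow> ext_inf L J M a a = a"
  by (simp add: ext_inf_eq_meet meet_def)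

lemma ext_inf_sup_absorb:
  "a \<in> ext_carrier L J M \<Longrightarrow> b \<in> ext_carrier L J M \<Longrightarrow> ext_inf L J M (ext_sup L J M a b) b = b"
  using ext.join_right ext.le_iff_join
  by (simp add: ext_sup_eq_join ext_inf_eq_meet ext.join_closed[simplified] meet_comm)

lemma ext_sup_inf_absorb:
  "a \<in> ext_carrier L J M \<Longrightarrow> b \<in> ext_carrier L J M \<Longrightarrow> ext_sup L J M (ext_inf L J M a b) b = b"
  using ext.meet_right ext.le_iff_meet
  by (simp add: ext_sup_eq_join ext_inf_eq_meet ext.meet_closed[simplified])

lemma ext_sup_Top:
  "Top \<in> ext_carrier L J M \<Longrightarrow> c \<in> ext_carrier L J M \<Longrightarrow> ext_sup L J M Top c = Top"
  using ext.le_iff_meet[of c Top] by (simp add: ext_sup_eq_join join_comm ext_order_def)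

lemma ext_inf_Bot:
  "Bot \<in> ext_carrier L J M \<Longrightarrow> c \<in> ext_carrier L J M \<Longrightarrow> ext_inf L J M Bot c = Bot"
  using ext.le_iff_join[of Bot c] by (simp add: ext_inf_eq_meet ext_order_def)

lemma ext_sup_Elt:
  "x \<in> L \<Longrightarrow> y \<in> L \<Longrightarrow> ext_sup L J M (Elt x) (Elt y) \<in> insert Top (Elt ` L)"
  using ext.join_left[of "Elt x" "Elt y"] ext_sup_closed[of "Elt x" "Elt y"]
  by (cases "ext_sup L J M (Elt x) (Elt y)") (simp_all add: ext_sup_eq_join ext_order_def)

lemma ext_inf_Elt:
  "x \<in> L \<Longrightarrow> y \<in> L \<Longrightarrow> ext_inf L J M (Elt x) (Elt y) \<in> insert Bot (Elt ` L)"
  using ext.meet_left[of "Elt x" "Elt y"] ext_inf_closed[of "Elt x" "Elt y"]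
  by (cases "ext_inf L J M (Elt x) (Elt y)") (simp_all add: ext_inf_eq_meet ext_order_def)

end

section \<open>Congruences and the quotient operations\<close>

lemma equiv_Inter:
  assumes "S \<noteq> {}" and "\<And>T. T \<in> S \<Longrightarrow> equiv A T"
  shows "equiv A (\<Inter>S)"
proof (rule equivI)
  show "\<Inter>S \<subseteq> A \<times> A" using assms equiv_type by blast
  show "refl_on A (\<Inter>S)" using assms by (auto simp: equiv_def refl_on_def)
  show "sym (\<Inter>S)" using assms unfolding equiv_def sym_def by blast
  show "trans (\<Inter>S)" using assms unfolding equiv_def trans_def by blast
qed

lemma ext_lattice_cong_Inter:
  assumes "S \<noteq> {}" and "\<And>T. T \<in> S \<Longrightarrow> ext_lattice_cong L J M T"
  shows "ext_lattice_cong L J M (\<Inter>S)"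
  using assms equiv_Inter[OF assms(1)] unfolding ext_lattice_cong_def by blast

lemma (in partial_lattice_on) ext_lattice_cong_Theta:
  assumes "E \<subseteq> L \<times> L"
  shows "ext_lattice_cong L J M (Theta L J M E)"
proof -
  have "ext_lattice_cong L J M (ext_carrier L J M \<times> ext_carrier L J M)"
    by (auto simp: ext_lattice_cong_def equiv_def refl_on_def sym_def trans_def
        ext_sup_closed ext_inf_closed)
  moreover have "(\<lambda>(x, y). (Elt x, Elt y)) ` E \<subseteq> ext_carrier L J M \<times> ext_carrier L J M"
    using assms by auto
  ultimately show ?thesis
    unfolding Theta_def by (intro ext_lattice_cong_Inter) auto
qed

definition class_rep :: "'a set \<Rightarrow> 'a" where
  "class_rep A = (SOME x. x \<in> A)"

definition option_of_nonempty :: "'a set \<Rightarrow> 'a set option" where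
  "option_of_nonempty A = (if A = {} then None else Some A)"

locale partial_lattice_congruence = partial_lattice_on +
  fixes E :: "('a \<times> 'a) set"
  assumes congruence: "E \<in> Con L J M"
begin

lemma equiv_E: "equiv L E"
  using congruence by (simp add: Con_def)

lemma Theta_Elt_iff: "(Elt x, Elt y) \<in> Theta L J M E \<longleftrightarrow> (x, y) \<in> E"
  using congruence by (auto simp: Con_def)

lemma equiv_Theta: "equiv (ext_carrier L J M) (Theta L J M E)"
  using ext_lattice_cong_Theta[OF equiv_type[OF equiv_E]] by (simp add: ext_lattice_cong_def)

lemma Theta_sup:
  "(a, a') \<in> Theta L J M E \<Longrightarrow> (b, b') \<in> Theta L J M E \<Longrightarrow>
    (ext_sup L J M a b, ext_sup L J M a' b') \<in> Theta L J M E"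
  using ext_lattice_cong_Theta[OF equiv_type[OF equiv_E]] by (simp add: ext_lattice_cong_def)

lemma Theta_inf:
  "(a, a') \<in> Theta L J M E \<Longrightarrow> (b, b') \<in> Theta L J M E \<Longrightarrow>
    (ext_inf L J M a b, ext_inf L J M a' b') \<in> Theta L J M E"
  using ext_lattice_cong_Theta[OF equiv_type[OF equiv_E]] by (simp add: ext_lattice_cong_def)

definition trace :: "'a ext \<Rightarrow> 'a set" where
  "trace t = {z \<in> L. (t, Elt z) \<in> Theta L J M E}"

definition quot_op :: "('a ext \<Rightarrow> 'a ext \<Rightarrow> 'a ext) \<Rightarrow> 'a set \<Rightarrow> 'a set \<Rightarrow> 'a set option" where
  "quot_op f A B = (if A \<in> L // E \<and> B \<in> L // E
     then option_of_nonempty (trace (f (Elt (class_rep A)) (Elt (class_rep B)))) else None)"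

lemma quot_join_eq_quot_op: "quot_join L J M E = quot_op (ext_sup L J M)"
  by (intro ext)
    (simp add: quot_join_def quot_op_def trace_def class_rep_def option_of_nonempty_def Let_def)

lemma quot_meet_eq_quot_op: "quot_meet L J M E = quot_op (ext_inf L J M)"
  by (intro ext)
    (simp add: quot_meet_def quot_op_def trace_def class_rep_def option_of_nonempty_def Let_def)

lemma Theta_refl: "a \<in> ext_carrier L J M \<Longrightarrow> (a, a) \<in> Theta L J M E"
  using equiv_Theta by (simp add: equiv_def refl_on_def)

lemma trace_cong:
  assumes st: "(s, t) \<in> Theta L J M E"
  shows "trace s = trace t"
proof -
  have "sym (Theta L J M E)" "trans (Theta L J M E)" using equiv_Theta by (simp_all add: equiv_def)
  moreover have "(t, s) \<in> Theta L J M E" using \<open>sym (Theta L J M E)\<close> st by (rule symD)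
  ultimately show ?thesis using st unfolding trace_def by (blast dest: transD)
qed

lemma trace_Elt: "x \<in> L \<Longrightarrow> trace (Elt x) = E `` {x}"
  using equiv_type[OF equiv_E] by (auto simp: trace_def Theta_Elt_iff)

lemma class_rep_in: "A \<in> L // E \<Longrightarrow> class_rep A \<in> A"
  unfolding class_rep_def using in_quotient_imp_non_empty[OF equiv_E] by (metis ex_in_conv someI)

lemma class_rep_in_L: "A \<in> L // E \<Longrightarrow> class_rep A \<in> L"
  using class_rep_in in_quotient_imp_subset[OF equiv_E] by blast

lemma trace_class_rep:
  assumes A: "A \<in> L // E"
  shows "trace (Elt (class_rep A)) = A"
proof -
  obtain x where x: "A = E `` {x}" "x \<in> L" using A by (rule quotientE)
  then have "(x, class_rep A) \<in> E" using class_rep_in[OF A] by simp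
  then have "E `` {x} = E `` {class_rep A}" by (rule equiv_class_eq[OF equiv_E])
  then show ?thesis using x class_rep_in_L[OF A] by (simp add: trace_Elt)
qed

lemma trace_nonempty_in_quotient:
  assumes "trace t \<noteq> {}"
  shows "trace t \<in> L // E" and "(t, Elt (class_rep (trace t))) \<in> Theta L J M E"
proof -
  obtain z where z: "z \<in> trace t" using assms by blast
  then have "z \<in> L" "trace t = trace (Elt z)"
    using trace_cong by (auto simp: trace_def)
  then show "trace t \<in> L // E" by (simp add: trace_Elt quotientI)
  have "class_rep (trace t) \<in> trace t" unfolding class_rep_def using z by (rule someI)
  then show "(t, Elt (class_rep (trace t))) \<in> Theta L J M E" by (simp add: trace_def)
qed

lemma trace_Elt_nonempty: "x \<in> L \<Longrightarrow> trace (Elt x) \<noteq> {}"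
  using equiv_class_self[OF equiv_E] by (auto simp: trace_Elt)

lemma quot_op_closed:
  assumes "quot_op f A B = Some C"
  shows "C \<in> L // E"
proof -
  let ?t = "f (Elt (class_rep A)) (Elt (class_rep B))"
  have "C = trace ?t" "trace ?t \<noteq> {}"
    using assms by (simp_all add: quot_op_def option_of_nonempty_def split: if_splits)
  then show ?thesis using trace_nonempty_in_quotient(1) by simp
qed

lemma quot_op_absorb:
  assumes g_Theta: "\<And>a a' b b'. (a, a') \<in> Theta L J M E \<Longrightarrow> (b, b') \<in> Theta L J M E \<Longrightarrow>
      (g a b, g a' b') \<in> Theta L J M E"
    and absorb: "\<And>a b. a \<in> ext_carrier L J M \<Longrightarrow> b \<in> ext_carrier L J M \<Longrightarrow> g (f a b) b = b"
    and A: "A \<in> L // E" and B: "B \<in> L // E" and AB: "quot_op f A B = Some A"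
  shows "quot_op g A B = Some B"
proof -
  let ?a = "Elt (class_rep A)" and ?b = "Elt (class_rep B)"
  have a: "?a \<in> ext_carrier L J M" and b: "?b \<in> ext_carrier L J M"
    using class_rep_in_L A B by simp_all
  have "trace (f ?a ?b) = A"
    using AB A B by (simp add: quot_op_def option_of_nonempty_def split: if_splits)
  then have "(f ?a ?b, ?a) \<in> Theta L J M E"
    using class_rep_in[OF A] by (auto simp: trace_def)
  then have "(g (f ?a ?b) ?b, g ?a ?b) \<in> Theta L J M E"
    using g_Theta Theta_refl[OF b] by blast
  then have "trace (g ?a ?b) = trace ?b"
    using trace_cong absorb[OF a b] by simp
  also have "\<dots> = B" by (rule trace_class_rep[OF B])
  finally show ?thesis
    using A B in_quotient_imp_non_empty[OF equiv_E B]
    by (simp add: quot_op_def option_of_nonempty_def)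
qed

end

(* f is \<or>* or \<and>*, and u the adjoined bound 1 resp. 0: the value of f on two elements of L
   whose join (meet) is undefined. *)
locale congruence_operation = partial_lattice_congruence +
  fixes f :: "'a ext \<Rightarrow> 'a ext \<Rightarrow> 'a ext" and u :: "'a ext"
  assumes op_closed: "a \<in> ext_carrier L J M \<Longrightarrow> b \<in> ext_carrier L J M \<Longrightarrow> f a b \<in> ext_carrier L J M"
    and op_Theta: "(a, a') \<in> Theta L J M E \<Longrightarrow> (b, b') \<in> Theta L J M E \<Longrightarrow>
      (f a b, f a' b') \<in> Theta L J M E"
    and op_commute: "a \<in> ext_carrier L J M \<Longrightarrow> b \<in> ext_carrier L J M \<Longrightarrow> f a b = f b a"
    and op_assoc: "a \<in> ext_carrier L J M \<Longrightarrow> b \<in> ext_carrier L J M \<Longrightarrow> c \<in> ext_carrier L J M \<Longrightarrow>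
      f (f a b) c = f a (f b c)"
    and op_idem: "a \<in> ext_carrier L J M \<Longrightarrow> f a a = a"
    and op_Elt: "x \<in> L \<Longrightarrow> y \<in> L \<Longrightarrow> f (Elt x) (Elt y) \<in> insert u (Elt ` L)"
    and op_absorbing: "u \<in> ext_carrier L J M \<Longrightarrow> c \<in> ext_carrier L J M \<Longrightarrow> f u c = u"
begin

lemma quot_op_idem: "A \<in> L // E \<Longrightarrow> quot_op f A A = Some A"
  using class_rep_in_L in_quotient_imp_non_empty[OF equiv_E]
  by (simp add: quot_op_def option_of_nonempty_def op_idem trace_class_rep)

lemma quot_op_commute: "A \<in> L // E \<Longrightarrow> B \<in> L // E \<Longrightarrow> quot_op f A B = quot_op f B A"
  using class_rep_in_L by (simp add: quot_op_def op_commute)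

lemma bind_quot_op:
  assumes A: "A \<in> L // E" and B: "B \<in> L // E" and C: "C \<in> L // E"
  shows "Option.bind (quot_op f A B) (\<lambda>U. quot_op f U C) =
    option_of_nonempty (trace (f (f (Elt (class_rep A)) (Elt (class_rep B))) (Elt (class_rep C))))"
proof -
  let ?s = "f (Elt (class_rep A)) (Elt (class_rep B))" and ?c = "Elt (class_rep C)"
  have s: "?s \<in> ext_carrier L J M" and c: "?c \<in> ext_carrier L J M"
    using op_closed class_rep_in_L A B C by simp_all
  show ?thesis
  proof (cases "trace ?s = {}")
    case True
    \<comment> \<open>then \<open>?s\<close> is the absorbing bound, so both sides are undefined\<close>
    then have "?s = u"
      using op_Elt[OF class_rep_in_L[OF A] class_rep_in_L[OF B]] trace_Elt_nonempty by auto
    then have "f ?s ?c = ?s" using s c op_absorbing by simp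
    then show ?thesis using True A B by (simp add: quot_op_def option_of_nonempty_def)
  next
    case False
    let ?U = "trace ?s"
    have U: "?U \<in> L // E" and sU: "(?s, Elt (class_rep ?U)) \<in> Theta L J M E"
      using trace_nonempty_in_quotient[OF False] by auto
    have "(f ?s ?c, f (Elt (class_rep ?U)) ?c) \<in> Theta L J M E"
      using op_Theta[OF sU Theta_refl[OF c]] .
    then have "quot_op f ?U C = option_of_nonempty (trace (f ?s ?c))"
      using U C trace_cong by (simp add: quot_op_def)
    then show ?thesis using False A B by (simp add: quot_op_def option_of_nonempty_def)
  qed
qed

lemma quot_op_assoc:
  assumes A: "A \<in> L // E" and B: "B \<in> L // E" and C: "C \<in> L // E"
  shows "Option.bind (quot_op f A B) (\<lambda>U. quot_op f U C) =
    Option.bind (quot_op f B C) (quot_op f A)"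
proof -
  let ?a = "Elt (class_rep A)" and ?b = "Elt (class_rep B)" and ?c = "Elt (class_rep C)"
  have abc: "?a \<in> ext_carrier L J M" "?b \<in> ext_carrier L J M" "?c \<in> ext_carrier L J M"
    using class_rep_in_L A B C by simp_all
  have "Option.bind (quot_op f A B) (\<lambda>U. quot_op f U C) = option_of_nonempty (trace (f (f ?a ?b) ?c))"
    by (rule bind_quot_op[OF A B C])
  also have "f (f ?a ?b) ?c = f (f ?b ?c) ?a"
    by (simp only: op_assoc[OF abc] op_commute[OF abc(1) op_closed[OF abc(2,3)]])
  also have "option_of_nonempty (trace \<dots>) = Option.bind (quot_op f B C) (\<lambda>V. quot_op f V A)"
    by (rule bind_quot_op[OF B C A, symmetric])
  also have "\<dots> = Option.bind (quot_op f B C) (quot_op f A)"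
    using quot_op_closed quot_op_commute[OF _ A] by (cases "quot_op f B C") auto
  finally show ?thesis .
qed

end

context partial_lattice_congruence
begin

sublocale join: congruence_operation L J M E "ext_sup L J M" Top
  by unfold_locales
    (fact ext_sup_closed Theta_sup ext_sup_commute ext_sup_assoc ext_sup_idem ext_sup_Elt
      ext_sup_Top)+

sublocale meet: congruence_operation L J M E "ext_inf L J M" Bot
  by unfold_locales
    (fact ext_inf_closed Theta_inf ext_inf_commute ext_inf_assoc ext_inf_idem ext_inf_Elt
      ext_inf_Bot)+

theorem partial_lattice_quot_op:
  "partial_lattice (L // E) (quot_op (ext_sup L J M)) (quot_op (ext_inf L J M))"
  unfolding partial_lattice_def
  by (intro conjI ballI allI impI)
    (assumption | rule quot_op_closed join.quot_op_idem meet.quot_op_idem join.quot_op_commute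
      meet.quot_op_commute join.quot_op_assoc meet.quot_op_assoc
      quot_op_absorb[where f = "ext_sup L J M" and g = "ext_inf L J M",
        OF Theta_inf ext_inf_sup_absorb]
      quot_op_absorb[where f = "ext_inf L J M" and g = "ext_sup L J M",
        OF Theta_sup ext_sup_inf_absorb])+

end

theorem mainTheorem7:
  fixes L :: "'a set" and J M :: "'a \<Rightarrow> 'a \<Rightarrow> 'a option" and E :: "('a \<times> 'a) set"
  assumes "partial_lattice L J M"
    and "E \<in> Con L J M"
  shows "partial_lattice (L // E) (quot_join L J M E) (quot_meet L J M E)"
proof -
  interpret partial_lattice_congruence L J M E
    using assms by unfold_locales
  show ?thesis
    using partial_lattice_quot_op by (simp only: quot_join_eq_quot_op quot_meet_eq_quot_op)
qed

end
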